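(* Let $T$ be a tree of order $n$ and diameter $d$ with maximum Wiener index, and let $x$ be a leaf of $T$. Then ${\rm ecc}(x)=d$.
   Context: All graphs are finite and simple. The Wiener index of a connected graph $G$ is $W(G)=\sum_{\{u,v\}\subseteq V(G)} d(u,v)$. A tree $T$ of order $n$ and diameter $d$ has maximum Wiener index if $W(T')\leq W(T)$ for every tree $T'$ of order $n$ and diameter $d$. A leaf is a vertex of degree $1$. The eccentricity ${\rm ecc}(v)$ of a vertex $v$ is the maximum distance from $v$ to a vertex of the graph. *)

theory Defs
  imports Main
begin

definition simple_graph :: "'a set \<Rightarrow> 'a set set \<Rightarrow> bool" where
  "simple_graph V E \<longleftrightarrow> finite V \<and> (\<forall>e\<in>E. \<exists>u v. e = {u, v} \<and> u \<noteq> v \<and> u \<in> V \<and> v \<in> V)"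

definition walk :: "'a set \<Rightarrow> 'a set set \<Rightarrow> 'a list \<Rightarrow> bool" where
  "walk V E xs \<longleftrightarrow> xs \<noteq> [] \<and> set xs \<subseteq> V \<and>
     (\<forall>i. Suc i < length xs \<longrightarrow> {xs ! i, xs ! Suc i} \<in> E)"

definition connected_graph :: "'a set \<Rightarrow> 'a set set \<Rightarrow> bool" where
  "connected_graph V E \<longleftrightarrow> V \<noteq> {} \<and>
     (\<forall>u\<in>V. \<forall>v\<in>V. \<exists>xs. walk V E xs \<and> hd xs = u \<and> last xs = v)"

definition has_cycle :: "'a set \<Rightarrow> 'a set set \<Rightarrow> bool" where
  "has_cycle V E \<longleftrightarrow> (\<exists>xs. walk V E xs \<and> distinct xs \<and> length xs \<ge> 3 \<and> {last xs, hd xs} \<in> E)"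

definition is_tree :: "'a set \<Rightarrow> 'a set set \<Rightarrow> bool" where
  "is_tree V E \<longleftrightarrow> simple_graph V E \<and> connected_graph V E \<and> \<not> has_cycle V E"

definition dist :: "'a set \<Rightarrow> 'a set set \<Rightarrow> 'a \<Rightarrow> 'a \<Rightarrow> nat" where
  "dist V E u v = (LEAST k. \<exists>xs. walk V E xs \<and> hd xs = u \<and> last xs = v \<and> length xs = Suc k)"

text \<open>Wiener index: sum over unordered pairs of distances; the ordered double sum
counts every unordered pair twice (and d(u,u)=0).\<close>
definition wiener :: "'a set \<Rightarrow> 'a set set \<Rightarrow> nat" where
  "wiener V E = (\<Sum>u\<in>V. \<Sum>v\<in>V. dist V E u v) div 2"

definition ecc :: "'a set \<Rightarrow> 'a set set \<Rightarrow> 'a \<Rightarrow> nat" where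
  "ecc V E x = Max {dist V E x u | u. u \<in> V}"

definition diameter :: "'a set \<Rightarrow> 'a set set \<Rightarrow> nat" where
  "diameter V E = Max {dist V E u v | u v. u \<in> V \<and> v \<in> V}"

definition degree :: "'a set set \<Rightarrow> 'a \<Rightarrow> nat" where
  "degree E x = card {e \<in> E. x \<in> e}"

definition leaf :: "'a set \<Rightarrow> 'a set set \<Rightarrow> 'a \<Rightarrow> bool" where
  "leaf V E x \<longleftrightarrow> x \<in> V \<and> degree E x = 1"

text \<open>Maximum Wiener index among trees of the same order and diameter. Every tree is
isomorphic to one on a vertex set of naturals, so competitors range over such trees.\<close>
definition max_wiener_tree :: "'a set \<Rightarrow> 'a set set \<Rightarrow> bool" where
  "max_wiener_tree V E \<longleftrightarrow> is_tree V E \<and>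
     (\<forall>(V' :: nat set) E'. is_tree V' E' \<and> card V' = card V \<and> diameter V' E' = diameter V E
        \<longrightarrow> wiener V' E' \<le> wiener V E)"

end

theory Submission
  imports Defs
begin

text \<open>Suppose a leaf \<open>x\<close> of a Wiener-maximal tree \<open>T\<close> had eccentricity less than the
  diameter \<open>d\<close>. Consider a part \<open>S \<ni> x\<close> of \<open>T\<close> joined to the rest by a single edge \<open>sp\<close>
  with \<open>s \<in> S\<close>, such that no two vertices of \<open>S\<close> are farther apart than \<open>x\<close> and \<open>s\<close>;
  initially \<open>S = {x}\<close>. All distances from \<open>S\<close> are then shorter than \<open>d\<close>, so a diametral
  pair lies outside \<open>S\<close> and \<open>p\<close> has a neighbour besides \<open>s\<close>. If it is unique, add \<open>p\<close>
  to \<open>S\<close> and continue. Otherwise \<open>p\<close> has two neighbours \<open>u\<^sub>1, u\<^sub>2\<close> outside \<open>S\<close>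
  whose branches are disjoint; for one of them, \<open>u\<close>, the vertices outside \<open>S\<close> are farther
  from \<open>u\<close> than from \<open>p\<close> in total. Replacing the edge \<open>sp\<close> by \<open>su\<close> then increases the
  Wiener index, and since \<open>u\<close> is only one step farther from everything than \<open>p\<close>, while
  \<open>x\<close> was short of \<open>d\<close>, the diameter stays \<open>d\<close>: a contradiction.\<close>

section \<open>Walks, reachability and cycles\<close>

abbreviation edge_chain :: "'a set set \<Rightarrow> 'a list \<Rightarrow> bool" where
  "edge_chain E xs \<equiv> successively (\<lambda>a b. {a, b} \<in> E) xs"

lemma walk_iff_edge_chain: "walk V E xs \<longleftrightarrow> xs \<noteq> [] \<and> set xs \<subseteq> V \<and> edge_chain E xs"
  by (simp add: walk_def successively_conv_nth)

lemma walk_rev: "walk V E (rev xs) \<longleftrightarrow> walk V E xs"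
  by (simp add: walk_iff_edge_chain insert_commute)

lemma walk_append_overlap:
  assumes "walk V E xs" "walk V E ys" "last xs = hd ys"
  shows "walk V E (xs @ tl ys)" "hd (xs @ tl ys) = hd xs" "last (xs @ tl ys) = last ys"
proof -
  have ys: "ys = hd ys # tl ys" using assms(2) by (simp add: walk_def)
  then have "set (tl ys) \<subseteq> V" "edge_chain E (last xs # tl ys)"
    using assms(2,3) by (auto simp: walk_iff_edge_chain) (metis (no_types) list.set_sel(2) subsetD)
  then show "walk V E (xs @ tl ys)"
    using assms(1) by (auto simp: walk_iff_edge_chain successively_append_iff successively_Cons)
  show "hd (xs @ tl ys) = hd xs" using assms(1) by (simp add: walk_def)
  show "last (xs @ tl ys) = last ys" using assms ys
    by (metis last_ConsL last_ConsR last_append)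
qed

lemma edge_chain_potential_bound:
  fixes f :: "'a \<Rightarrow> int"
  assumes "edge_chain E xs" "xs \<noteq> []" "\<And>v w. {v, w} \<in> E \<Longrightarrow> f w \<le> f v + 1"
  shows "f (last xs) \<le> f (hd xs) + int (length xs - 1)"
  using assms
proof (induction xs rule: induct_list012)
  case (3 a b xs)
  then have "f (last (b # xs)) \<le> f b + int (length xs)" "f b \<le> f a + 1" by auto
  then show ?case by simp
qed simp_all

lemma edge_chain_closed:
  assumes "edge_chain E xs" "xs \<noteq> []" "hd xs \<in> A" "\<And>v w. {v, w} \<in> E \<Longrightarrow> v \<in> A \<Longrightarrow> w \<in> A"
  shows "set xs \<subseteq> A"
  using assms by (induction xs rule: induct_list012) auto

lemma edge_chain_distinct:
  assumes "edge_chain E xs" "xs \<noteq> []"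
  shows "\<exists>ys. edge_chain E ys \<and> distinct ys \<and> ys \<noteq> [] \<and> hd ys = hd xs \<and> last ys = last xs
           \<and> set ys \<subseteq> set xs"
  using assms
proof (induction "length xs" arbitrary: xs rule: less_induct)
  case less
  show ?case
  proof (cases "distinct xs")
    case False
    then obtain as y bs cs where xs: "xs = as @ [y] @ bs @ [y] @ cs"
      using not_distinct_decomp by blast
    define zs where "zs = as @ [y] @ cs"
    have "edge_chain E ((as @ [y]) @ (bs @ [y] @ cs))" "edge_chain E ((as @ [y] @ bs) @ (y # cs))"
      using less.prems(1) xs by simp_all
    then have "edge_chain E (as @ [y])" "edge_chain E (y # cs)"
      by (simp_all only: successively_append_iff)
    then have "edge_chain E zs"
      unfolding zs_def by (auto simp: successively_append_iff successively_Cons split: list.splits)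
    moreover have "length zs < length xs" "zs \<noteq> []" "hd zs = hd xs" "last zs = last xs"
      "set zs \<subseteq> set xs"
      unfolding zs_def xs by (auto simp: hd_append)
    ultimately show ?thesis using less.hyps[of zs] by fastforce
  qed (use less.prems in blast)
qed

lemma successively_remdups_adj_weaken:
  "successively (\<lambda>a b. a = b \<or> P a b) xs \<Longrightarrow> successively P (remdups_adj xs)"
  by (induction xs rule: remdups_adj.induct) (auto simp: successively_Cons)

lemma edge_chain_collapse:
  assumes "edge_chain E1 xs" "c \<in> A"
    and inside: "\<And>v w. {v, w} \<in> E1 \<Longrightarrow> v \<in> A \<Longrightarrow> w \<in> A \<Longrightarrow> {v, w} \<in> E2"
    and leaving: "\<And>v w. {v, w} \<in> E1 \<Longrightarrow> v \<in> A \<Longrightarrow> w \<notin> A \<Longrightarrow> v = c"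
  shows "edge_chain E2 (remdups_adj (map (\<lambda>v. if v \<in> A then v else c) xs))"
proof -
  let ?g = "\<lambda>v. if v \<in> A then v else c"
  have "successively (\<lambda>a b. a = b \<or> {a, b} \<in> E2) (map ?g xs)"
    unfolding successively_map
  proof (rule successively_mono[OF assms(1)])
    fix v w assume e: "{v, w} \<in> E1"
    then have "{w, v} \<in> E1" by (simp add: insert_commute)
    then show "?g v = ?g w \<or> {?g v, ?g w} \<in> E2"
      using inside[OF e] leaving[OF e] leaving[of w v] by auto
  qed
  then show ?thesis by (rule successively_remdups_adj_weaken)
qed

definition reachable :: "'a set \<Rightarrow> 'a set set \<Rightarrow> 'a \<Rightarrow> 'a \<Rightarrow> bool" where
  "reachable V E a b \<longleftrightarrow> (\<exists>xs. walk V E xs \<and> hd xs = a \<and> last xs = b)"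

lemma connected_graph_iff_reachable:
  "connected_graph V E \<longleftrightarrow> V \<noteq> {} \<and> (\<forall>a\<in>V. \<forall>b\<in>V. reachable V E a b)"
  by (simp add: connected_graph_def reachable_def)

lemma reachable_refl: "a \<in> V \<Longrightarrow> reachable V E a a"
  unfolding reachable_def by (rule exI[of _ "[a]"]) (simp add: walk_iff_edge_chain)

lemma reachable_edge: "{a, b} \<in> E \<Longrightarrow> a \<in> V \<Longrightarrow> b \<in> V \<Longrightarrow> reachable V E a b"
  unfolding reachable_def by (rule exI[of _ "[a, b]"]) (simp add: walk_iff_edge_chain)

lemma reachable_sym: "reachable V E a b \<Longrightarrow> reachable V E b a"
  unfolding reachable_def by (metis walk_rev hd_rev last_rev)

lemma reachable_trans: "reachable V E a b \<Longrightarrow> reachable V E b c \<Longrightarrow> reachable V E a c"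
  unfolding reachable_def by (metis walk_append_overlap)

lemma reachable_collapse:
  assumes "reachable V E1 a b" "a \<in> A" "b \<in> A" "c \<in> A" "A \<subseteq> V"
    and inside: "\<And>v w. {v, w} \<in> E1 \<Longrightarrow> v \<in> A \<Longrightarrow> w \<in> A \<Longrightarrow> {v, w} \<in> E2"
    and leaving: "\<And>v w. {v, w} \<in> E1 \<Longrightarrow> v \<in> A \<Longrightarrow> w \<notin> A \<Longrightarrow> v = c"
  shows "reachable V E2 a b"
proof -
  obtain xs where xs: "walk V E1 xs" "hd xs = a" "last xs = b"
    using assms(1) unfolding reachable_def by blast
  define ys where "ys = remdups_adj (map (\<lambda>v. if v \<in> A then v else c) xs)"
  have "edge_chain E2 ys"
    unfolding ys_def
    by (rule edge_chain_collapse[OF _ assms(4) inside leaving])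
      (use xs(1) in \<open>simp_all add: walk_iff_edge_chain\<close>)
  moreover have "ys \<noteq> []" "hd ys = a" "last ys = b" "set ys \<subseteq> V"
    unfolding ys_def using xs assms(2-5) by (auto simp: walk_iff_edge_chain hd_map last_map)
  ultimately show ?thesis unfolding reachable_def walk_iff_edge_chain by blast
qed

lemma reachable_closed:
  assumes "reachable V E a b" "a \<in> A" "\<And>v w. {v, w} \<in> E \<Longrightarrow> v \<in> A \<Longrightarrow> w \<in> A"
  shows "b \<in> A"
proof -
  obtain xs where xs: "walk V E xs" "hd xs = a" "last xs = b"
    using assms(1) unfolding reachable_def by blast
  then have "set xs \<subseteq> A"
    using edge_chain_closed[of E xs A] assms(2,3) by (simp add: walk_iff_edge_chain)
  then show ?thesis using xs by (auto simp: walk_def)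
qed

lemma bypassed_edge_imp_has_cycle:
  assumes "{a, b} \<in> E" "a \<noteq> b" "reachable V (E - {{a, b}}) a b"
  shows "has_cycle V E"
proof -
  obtain xs where "walk V (E - {{a, b}}) xs" "hd xs = a" "last xs = b"
    using assms(3) unfolding reachable_def by blast
  then obtain ys where ys: "edge_chain (E - {{a, b}}) ys" "distinct ys" "ys \<noteq> []"
      "hd ys = a" "last ys = b" "set ys \<subseteq> V"
    using edge_chain_distinct[of "E - {{a, b}}" xs] unfolding walk_iff_edge_chain by blast
  have "length ys \<ge> 3"
  proof (rule ccontr)
    assume short: "\<not> length ys \<ge> 3"
    have "ys \<noteq> [a]" using ys(5) assms(2) by auto
    moreover have "ys \<noteq> [a, b]"
    proof
      assume "ys = [a, b]"
      with ys(1) show False by simp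
    qed
    ultimately show False
      using short ys(3-5) by (cases ys; cases "tl ys"; cases "tl (tl ys)") auto
  qed
  moreover have "walk V E ys"
    using ys unfolding walk_iff_edge_chain by (auto elim: successively_mono)
  moreover have "{last ys, hd ys} \<in> E" using ys(4,5) assms(1) by (simp add: insert_commute)
  ultimately show ?thesis unfolding has_cycle_def using ys(2) by blast
qed

lemma has_cycle_imp_bypassed_edge:
  assumes "has_cycle V E"
  shows "\<exists>a b. {a, b} \<in> E \<and> a \<noteq> b \<and> reachable V (E - {{a, b}}) a b"
proof -
  obtain xs where xs: "walk V E xs" "distinct xs" "length xs \<ge> 3" "{last xs, hd xs} \<in> E"
    using assms unfolding has_cycle_def by blast
  define n where "n = length xs - 1"
  have "xs \<noteq> []" using xs(3) by auto
  then have ends: "hd xs = xs ! 0" "last xs = xs ! n" "n \<ge> 2"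
    using xs(3) by (auto simp: n_def hd_conv_nth last_conv_nth)
  have index_eq: "xs ! i = xs ! j \<longleftrightarrow> i = j" if "i \<le> n" "j \<le> n" for i j
    using xs(2,3) that nth_eq_iff_index_eq[of xs i j] unfolding n_def by linarith
  have "{xs ! i, xs ! Suc i} \<in> E - {{hd xs, last xs}}" if "Suc i < length xs" for i
  proof -
    have "{xs ! i, xs ! Suc i} \<noteq> {xs ! 0, xs ! n}"
      using that index_eq[of i 0] index_eq[of i n] index_eq[of "Suc i" 0] index_eq[of "Suc i" n] ends(3)
      unfolding n_def by (auto simp: doubleton_eq_iff)
    then show ?thesis using xs(1) that ends by (simp add: walk_def)
  qed
  then have "walk V (E - {{hd xs, last xs}}) xs" using xs(1) by (simp add: walk_def)
  moreover have "hd xs \<noteq> last xs" using ends index_eq[of 0 n] by simp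
  moreover have "{hd xs, last xs} \<in> E" using xs(4) by (simp add: insert_commute)
  ultimately show ?thesis unfolding reachable_def by blast
qed

lemma dist_le_diameter: "finite V \<Longrightarrow> a \<in> V \<Longrightarrow> b \<in> V \<Longrightarrow> dist V E a b \<le> diameter V E"
  unfolding diameter_def by (rule Max_ge) (auto simp: finite_image_set2)

lemma diameter_attained:
  assumes "finite V" "V \<noteq> {}"
  shows "\<exists>a\<in>V. \<exists>b\<in>V. dist V E a b = diameter V E"
proof -
  have "diameter V E \<in> {dist V E a b | a b. a \<in> V \<and> b \<in> V}"
    unfolding diameter_def using assms by (intro Max_in) (auto simp: finite_image_set2)
  then show ?thesis by (auto intro: sym)
qed

lemma diameter_eqI:
  assumes "finite V" "\<And>a b. a \<in> V \<Longrightarrow> b \<in> V \<Longrightarrow> dist V E a b \<le> m"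
    and "a0 \<in> V" "b0 \<in> V" "dist V E a0 b0 = m"
  shows "diameter V E = m"
  unfolding diameter_def using assms by (intro Max_eqI) (auto simp: finite_image_set2)

lemma dist_le_ecc: "finite V \<Longrightarrow> b \<in> V \<Longrightarrow> dist V E x b \<le> ecc V E x"
  unfolding ecc_def by (rule Max_ge) auto

lemma ecc_attained:
  assumes "finite V" "x \<in> V"
  obtains b where "b \<in> V" "ecc V E x = dist V E x b"
proof -
  have "ecc V E x \<in> {dist V E x b | b. b \<in> V}"
    unfolding ecc_def using assms by (intro Max_in) auto
  then show ?thesis using that by blast
qed

section \<open>Distances in connected simple graphs\<close>

locale connected_simple_graph =
  fixes V :: "'a set" and E :: "'a set set"
  assumes connected: "connected_graph V E" and simple: "simple_graph V E"
begin

lemma finite_V: "finite V"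
  using simple by (simp add: simple_graph_def)

lemma edge_vertices: "{a, b} \<in> E \<Longrightarrow> a \<in> V \<and> b \<in> V"
  using simple unfolding simple_graph_def by (metis doubleton_eq_iff)

lemma edge_ends_distinct: "{a, b} \<in> E \<Longrightarrow> a \<noteq> b"
  using simple unfolding simple_graph_def by (metis doubleton_eq_iff insert_absorb2)

lemma shortest_walk:
  assumes "a \<in> V" "b \<in> V"
  shows "\<exists>xs. walk V E xs \<and> hd xs = a \<and> last xs = b \<and> length xs = Suc (dist V E a b)"
proof -
  obtain xs where xs: "walk V E xs" "hd xs = a" "last xs = b"
    using connected assms unfolding connected_graph_def by blast
  then have "length xs = Suc (length xs - 1)" by (simp add: walk_def)
  with xs have "\<exists>k xs. walk V E xs \<and> hd xs = a \<and> last xs = b \<and> length xs = Suc k" by blast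
  then show ?thesis unfolding dist_def by (rule LeastI_ex)
qed

lemma dist_le_walk_length: "walk V E xs \<Longrightarrow> dist V E (hd xs) (last xs) \<le> length xs - 1"
  unfolding dist_def by (rule Least_le) (auto simp: walk_def)

lemma dist_self: "a \<in> V \<Longrightarrow> dist V E a a = 0"
  using dist_le_walk_length[of "[a]"] by (simp add: walk_iff_edge_chain)

lemma dist_commute:
  assumes "a \<in> V" "b \<in> V"
  shows "dist V E a b = dist V E b a"
proof -
  have "dist V E b a \<le> dist V E a b" if ab: "a \<in> V" "b \<in> V" for a b
  proof -
    obtain xs where "walk V E xs" "hd xs = a" "last xs = b" "length xs = Suc (dist V E a b)"
      using shortest_walk ab by blast
    then show ?thesis
      using dist_le_walk_length[of "rev xs"] by (simp add: walk_rev hd_rev last_rev)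
  qed
  then show ?thesis using assms by (simp add: le_antisym)
qed

lemma dist_triangle:
  assumes "a \<in> V" "b \<in> V" "c \<in> V"
  shows "dist V E a c \<le> dist V E a b + dist V E b c"
proof -
  obtain xs where xs: "walk V E xs" "hd xs = a" "last xs = b" "length xs = Suc (dist V E a b)"
    using shortest_walk assms by blast
  obtain ys where ys: "walk V E ys" "hd ys = b" "last ys = c" "length ys = Suc (dist V E b c)"
    using shortest_walk assms by blast
  show ?thesis
    using dist_le_walk_length walk_append_overlap[of V E xs ys] xs ys by fastforce
qed

lemma dist_edge: "{a, b} \<in> E \<Longrightarrow> dist V E a b = 1"
proof -
  assume e: "{a, b} \<in> E"
  then have "dist V E a b \<le> 1"
    using dist_le_walk_length[of "[a, b]"] edge_vertices by (simp add: walk_iff_edge_chain)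
  moreover have "dist V E a b \<noteq> 0"
  proof
    assume "dist V E a b = 0"
    then obtain xs where "walk V E xs" "hd xs = a" "last xs = b" "length xs = 1"
      using shortest_walk edge_vertices[OF e] by fastforce
    then show False using edge_ends_distinct[OF e] by (cases xs) auto
  qed
  ultimately show ?thesis by simp
qed

lemma dist_edge_step: "{v, w} \<in> E \<Longrightarrow> c \<in> V \<Longrightarrow> dist V E c w \<le> dist V E c v + 1"
  using dist_triangle[of c v w] dist_edge[of v w] edge_vertices[of v w] by simp

lemma lipschitz_diff_le_dist:
  fixes f :: "'a \<Rightarrow> int"
  assumes "\<And>v w. {v, w} \<in> E \<Longrightarrow> f w \<le> f v + 1" "a \<in> V" "b \<in> V"
  shows "f b - f a \<le> int (dist V E a b)"
proof -
  obtain xs where "walk V E xs" "hd xs = a" "last xs = b" "length xs = Suc (dist V E a b)"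
    using shortest_walk assms by blast
  then show ?thesis
    using edge_chain_potential_bound[of E xs f] assms(1) by (auto simp: walk_iff_edge_chain)
qed

end

definition one_edge_cut :: "'a set \<Rightarrow> 'a set set \<Rightarrow> 'a set \<Rightarrow> 'a \<Rightarrow> 'a \<Rightarrow> bool" where
  "one_edge_cut V E S s p \<longleftrightarrow> S \<subseteq> V \<and> s \<in> S \<and> p \<in> V \<and> p \<notin> S \<and> {s, p} \<in> E \<and>
     (\<forall>v w. {v, w} \<in> E \<longrightarrow> v \<in> S \<longrightarrow> w \<notin> S \<longrightarrow> v = s \<and> w = p)"

context connected_simple_graph
begin

lemma one_edge_cut_complement:
  assumes "one_edge_cut V E S s p"
  shows "one_edge_cut V E (V - S) p s"
proof -
  have "v = p \<and> w = s" if e: "{v, w} \<in> E" "v \<in> V - S" "w \<notin> V - S" for v w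
  proof -
    have "{w, v} \<in> E" "w \<in> S" using e edge_vertices[OF e(1)] by (auto simp: insert_commute)
    then show ?thesis using assms e(2) unfolding one_edge_cut_def by blast
  qed
  then show ?thesis using assms unfolding one_edge_cut_def by (auto simp: insert_commute)
qed

lemma dist_across_cut:
  assumes cut: "one_edge_cut V E S s p" and a: "a \<in> S" and b: "b \<in> V" "b \<notin> S"
  shows "dist V E a b = dist V E a s + 1 + dist V E p b"
proof -
  have S: "S \<subseteq> V" "s \<in> S" "p \<in> V" "p \<notin> S" "{s, p} \<in> E"
    and leaving: "\<And>v w. {v, w} \<in> E \<Longrightarrow> v \<in> S \<Longrightarrow> w \<notin> S \<Longrightarrow> v = s \<and> w = p"
    using cut unfolding one_edge_cut_def by blast+
  have aV: "a \<in> V" "s \<in> V" using S a by auto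
  have "dist V E a b \<le> dist V E a s + dist V E s p + dist V E p b"
    using dist_triangle[of a s b] dist_triangle[of s p b] aV b S by simp
  then have upper: "dist V E a b \<le> dist V E a s + 1 + dist V E p b"
    using dist_edge[OF S(5)] by simp
  define f where
    "f v = (if v \<in> S then int (dist V E a v) else int (dist V E a s) + 1 + int (dist V E p v))" for v
  have "f w \<le> f v + 1" if e: "{v, w} \<in> E" for v w
  proof -
    have "{w, v} \<in> E" using e by (simp add: insert_commute)
    then show ?thesis
      using dist_edge_step[OF e aV(1)] dist_edge_step[OF e S(3)] leaving[OF e] leaving[of w v]
        dist_self[OF S(3)]
      by (cases "v \<in> S"; cases "w \<in> S") (auto simp: f_def)
  qed
  then have "f b - f a \<le> int (dist V E a b)"
    using lipschitz_diff_le_dist aV b by blast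
  then show ?thesis using upper a b dist_self[OF aV(1)] by (simp add: f_def)
qed

lemma dist_inside_attached_le:
  assumes other: "connected_simple_graph V E'" and S: "S \<subseteq> V" "s \<in> S"
    and inside: "\<And>v w. {v, w} \<in> E \<Longrightarrow> v \<in> S \<Longrightarrow> w \<in> S \<Longrightarrow> {v, w} \<in> E'"
    and leaving: "\<And>v w. {v, w} \<in> E \<Longrightarrow> v \<in> S \<Longrightarrow> w \<notin> S \<Longrightarrow> v = s"
    and ab: "a \<in> S" "b \<in> S"
  shows "dist V E' a b \<le> dist V E a b"
proof -
  have "a \<in> V" using ab S by auto
  then have step: "dist V E' a w \<le> dist V E' a v + 1" if "{v, w} \<in> E'" for v w
    using connected_simple_graph.dist_edge_step[OF other that] by blast
  define f where "f v = (if v \<in> S then int (dist V E' a v) else int (dist V E' a s) + 1)" for v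
  have "f w \<le> f v + 1" if e: "{v, w} \<in> E" for v w
  proof -
    have "{w, v} \<in> E" using e by (simp add: insert_commute)
    then show ?thesis
      using step[OF inside[OF e]] leaving[OF e] leaving[of w v] ab S
      by (cases "v \<in> S"; cases "w \<in> S") (auto simp: f_def)
  qed
  then have "f b - f a \<le> int (dist V E a b)"
    using lipschitz_diff_le_dist ab S by blast
  then show ?thesis using ab S connected_simple_graph.dist_self[OF other, of a] by (auto simp: f_def)
qed

lemma dist_eq_if_same_inside:
  assumes other: "connected_simple_graph V E'"
    and cut: "one_edge_cut V E T t q" and cut': "one_edge_cut V E' T t' q'"
    and same: "\<And>v w. v \<in> T \<Longrightarrow> w \<in> T \<Longrightarrow> {v, w} \<in> E \<longleftrightarrow> {v, w} \<in> E'"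
    and ab: "a \<in> T" "b \<in> T"
  shows "dist V E' a b = dist V E a b"
proof (rule antisym)
  show "dist V E' a b \<le> dist V E a b"
    using cut same ab unfolding one_edge_cut_def
    by (intro dist_inside_attached_le[OF other, of T t]) blast+
  show "dist V E a b \<le> dist V E' a b"
    using cut' same ab unfolding one_edge_cut_def
    by (intro connected_simple_graph.dist_inside_attached_le[OF other connected_simple_graph_axioms,
          of T t']) blast+
qed

end

section \<open>Branches of a tree\<close>

locale tree_graph =
  fixes V :: "'a set" and E :: "'a set set"
  assumes tree: "is_tree V E"

sublocale tree_graph \<subseteq> connected_simple_graph
  using tree by unfold_locales (simp_all add: is_tree_def)

definition branch :: "'a set \<Rightarrow> 'a set set \<Rightarrow> 'a \<Rightarrow> 'a \<Rightarrow> 'a set" where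
  "branch V E a b = {v \<in> V. reachable V (E - {{a, b}}) a v}"

context tree_graph
begin

lemma acyclic: "\<not> has_cycle V E"
  using tree by (simp add: is_tree_def)

lemma branch_cut:
  assumes e: "{a, b} \<in> E"
  shows "one_edge_cut V E (branch V E a b) a b"
proof -
  let ?C = "branch V E a b"
  have ab: "a \<in> V" "b \<in> V" "a \<noteq> b" using edge_vertices[OF e] edge_ends_distinct[OF e] by auto
  have "a \<in> ?C" using ab(1) reachable_refl by (simp add: branch_def)
  moreover have "b \<notin> ?C"
    using bypassed_edge_imp_has_cycle[OF e ab(3)] acyclic by (auto simp: branch_def)
  moreover have "w \<in> ?C" if vw: "{v, w} \<in> E" "v \<in> ?C" "{v, w} \<noteq> {a, b}" for v w
  proof -
    have "reachable V (E - {{a, b}}) v w" using vw edge_vertices[OF vw(1)] by (simp add: reachable_edge)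
    then show ?thesis
      using vw(2) reachable_trans edge_vertices[OF vw(1)] by (fastforce simp: branch_def)
  qed
  ultimately show ?thesis
    using ab e unfolding one_edge_cut_def by (auto simp: branch_def doubleton_eq_iff)
qed

lemma dist_shift_along_edge:
  assumes e: "{u, p} \<in> E" and b: "b \<in> V"
  shows "int (dist V E u b) - int (dist V E p b) = (if b \<in> branch V E u p then -1 else 1)"
proof -
  note cut = branch_cut[OF e]
  have uV: "u \<in> V" "p \<in> V" "u \<in> branch V E u p" "p \<notin> branch V E u p"
    using cut unfolding one_edge_cut_def by auto
  show ?thesis
  proof (cases "b \<in> branch V E u p")
    case True
    then have "dist V E p b = dist V E u b + 1"
      using dist_across_cut[OF cut True uV(2,4)] dist_self dist_commute b uV by simp
    then show ?thesis using True by simp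
  next
    case False
    then show ?thesis using dist_across_cut[OF cut uV(3) b False] dist_self uV by simp
  qed
qed

lemma branch_beyond_cut:
  assumes cut: "one_edge_cut V E S s p" and e: "{u, p} \<in> E" and u: "u \<notin> S"
  shows "branch V E u p \<subseteq> V - S - {p}"
proof
  fix a assume a: "a \<in> branch V E u p"
  note cut' = branch_cut[OF e]
  have "a \<in> V" "a \<noteq> p" using a cut' unfolding one_edge_cut_def by auto
  moreover have "a \<notin> S"
  proof
    assume aS: "a \<in> S"
    have uV: "u \<in> V" "p \<in> V" "p \<notin> branch V E u p" using cut' unfolding one_edge_cut_def by auto
    have "dist V E a u = dist V E a s + 1 + dist V E p u"
      using dist_across_cut[OF cut aS] uV u by blast
    moreover have "dist V E a p = dist V E a u + 1"
      using dist_across_cut[OF cut' a uV(2,3)] dist_self uV by simp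
    moreover have "dist V E a p = dist V E a s + 1"
      using dist_across_cut[OF cut aS uV(2)] cut dist_self uV unfolding one_edge_cut_def by simp
    ultimately show False using dist_edge[OF e] dist_commute uV by simp
  qed
  ultimately show "a \<in> V - S - {p}" by blast
qed

lemma sum_dist_shift_beyond_cut:
  assumes cut: "one_edge_cut V E S s p" and e: "{u, p} \<in> E" and u: "u \<notin> S"
  shows "(\<Sum>b\<in>V - S. int (dist V E u b) - int (dist V E p b))
           = int (card (V - S)) - 2 * int (card (branch V E u p))"
proof -
  let ?C = "branch V E u p"
  have C: "?C \<subseteq> V - S" using branch_beyond_cut[OF assms] by blast
  have fin: "finite (V - S)" using finite_V by simp
  have "(\<Sum>b\<in>V - S. int (dist V E u b) - int (dist V E p b))
      = (\<Sum>b\<in>V - S. if b \<in> ?C then -1 else 1)"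
    using dist_shift_along_edge[OF e] by (intro sum.cong) auto
  also have "\<dots> = - int (card ?C) + int (card (V - S - ?C))"
    using fin C by (simp add: sum.If_cases Int_absorb1 Diff_eq)
  also have "\<dots> = int (card (V - S)) - 2 * int (card ?C)"
    using fin C by (simp add: card_Diff_subset finite_subset card_mono)
  finally show ?thesis .
qed

lemma branches_disjoint:
  assumes e1: "{u1, p} \<in> E" and e2: "{u2, p} \<in> E" and ne: "u1 \<noteq> u2"
  shows "branch V E u1 p \<inter> branch V E u2 p = {}"
proof (rule ccontr)
  assume "branch V E u1 p \<inter> branch V E u2 p \<noteq> {}"
  then obtain b where b: "b \<in> branch V E u1 p" "b \<in> branch V E u2 p" by blast
  note cut1 = branch_cut[OF e1] and cut2 = branch_cut[OF e2]
  have V: "u1 \<in> V" "p \<in> V" "p \<notin> branch V E u1 p" "p \<notin> branch V E u2 p"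
    using cut1 cut2 unfolding one_edge_cut_def by auto
  have "u1 \<notin> branch V E u2 p"
    using cut2 e1 ne unfolding one_edge_cut_def by blast
  then have "dist V E b u1 = dist V E b u2 + 1 + dist V E p u1"
    using dist_across_cut[OF cut2 b(2)] V by blast
  moreover have "dist V E b p = dist V E b u1 + 1" "dist V E b p = dist V E b u2 + 1"
    using dist_across_cut[OF cut1 b(1) V(2,3)] dist_across_cut[OF cut2 b(2) V(2,4)] dist_self[OF V(2)]
    by simp_all
  ultimately show False using dist_edge[OF e1] dist_commute V by simp
qed

text \<open>Two disjoint branches at \<open>p\<close>, both missing \<open>p\<close>, cannot both contain at least half
  of the vertices beyond the cut.\<close>

lemma farther_neighbour_exists:
  assumes cut: "one_edge_cut V E S s p" and e1: "{u1, p} \<in> E" and e2: "{u2, p} \<in> E"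
    and u: "u1 \<notin> S" "u2 \<notin> S" "u1 \<noteq> u2"
  shows "\<exists>u\<in>{u1, u2}. (\<Sum>b\<in>V - S. int (dist V E p b)) < (\<Sum>b\<in>V - S. int (dist V E u b))"
proof -
  let ?C1 = "branch V E u1 p" and ?C2 = "branch V E u2 p"
  have fin: "finite (V - S)" using finite_V by simp
  have p: "p \<in> V - S" using cut unfolding one_edge_cut_def by blast
  have "?C1 \<union> ?C2 \<subseteq> V - S - {p}"
    using branch_beyond_cut[OF cut e1 u(1)] branch_beyond_cut[OF cut e2 u(2)] by blast
  then have "card (?C1 \<union> ?C2) \<le> card (V - S - {p})"
    using fin by (simp add: card_mono)
  also have "\<dots> < card (V - S)" by (rule card_Diff1_less[OF fin p])
  finally have "card (?C1 \<union> ?C2) < card (V - S)" .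
  moreover have "card (?C1 \<union> ?C2) = card ?C1 + card ?C2"
    using branches_disjoint[OF e1 e2 u(3)] finite_V by (simp add: branch_def card_Un_disjoint)
  ultimately show ?thesis
    using sum_dist_shift_beyond_cut[OF cut e1 u(1)] sum_dist_shift_beyond_cut[OF cut e2 u(2)]
    by (auto simp: sum_subtractf)
qed

end

section \<open>Moving a part of a tree to another attachment vertex\<close>

definition swap_edge :: "'a set set \<Rightarrow> 'a \<Rightarrow> 'a \<Rightarrow> 'a \<Rightarrow> 'a set set" where
  "swap_edge E s p u = insert {s, u} (E - {{s, p}})"

locale edge_swap = tree_graph +
  fixes S :: "'a set" and s p u :: 'a
  assumes cut: "one_edge_cut V E S s p" and u: "u \<in> V" "u \<notin> S"
begin

abbreviation E' :: "'a set set" where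
  "E' \<equiv> swap_edge E s p u"

lemma cut_facts: "S \<subseteq> V" "s \<in> S" "s \<in> V" "p \<in> V" "p \<notin> S"
  using cut unfolding one_edge_cut_def by auto

lemma same_edges_in_S: "v \<in> S \<Longrightarrow> w \<in> S \<Longrightarrow> {v, w} \<in> E \<longleftrightarrow> {v, w} \<in> E'"
  using cut_facts u by (auto simp: swap_edge_def doubleton_eq_iff)

lemma same_edges_outside_S: "v \<in> V - S \<Longrightarrow> w \<in> V - S \<Longrightarrow> {v, w} \<in> E \<longleftrightarrow> {v, w} \<in> E'"
  using cut_facts by (auto simp: swap_edge_def doubleton_eq_iff)

lemma swapped_simple: "simple_graph V E'"
  using simple cut_facts u unfolding simple_graph_def swap_edge_def by blast

lemma swapped_cut: "one_edge_cut V E' S s u"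
  using cut u unfolding one_edge_cut_def swap_edge_def by (auto simp: doubleton_eq_iff)

lemma swapped_connected: "connected_graph V E'"
proof -
  have reach: "reachable V E a b" if "a \<in> V" "b \<in> V" for a b
    using connected that unfolding connected_graph_iff_reachable by blast
  have leaving: "v = s" if "{v, w} \<in> E" "v \<in> S" "w \<notin> S" for v w
    using cut that unfolding one_edge_cut_def by blast
  have leaving_compl: "v = p" if "{v, w} \<in> E" "v \<in> V - S" "w \<notin> V - S" for v w
    using one_edge_cut_complement[OF cut] that unfolding one_edge_cut_def by blast
  have inside: "{v, w} \<in> E'" if "{v, w} \<in> E" "v \<in> S" "w \<in> S" for v w
    using same_edges_in_S[OF that(2,3)] that(1) by blast
  have inside_compl: "{v, w} \<in> E'" if "{v, w} \<in> E" "v \<in> V - S" "w \<in> V - S" for v w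
    using same_edges_outside_S[OF that(2,3)] that(1) by blast
  have to_s: "reachable V E' a s" if a: "a \<in> S" for a
  proof -
    have "a \<in> V" using a cut_facts by blast
    then show ?thesis
      by (rule reachable_collapse[OF reach[OF _ cut_facts(3)] a cut_facts(2,2,1) inside leaving])
  qed
  have to_u: "reachable V E' b u" if b: "b \<in> V - S" for b
  proof -
    have "b \<in> V" "u \<in> V - S" "p \<in> V - S" using b u cut_facts by auto
    then show ?thesis
      by (rule reachable_collapse[OF reach[OF _ u(1)] b _ _ Diff_subset inside_compl leaving_compl])
  qed
  have "{u, s} \<in> E'" by (simp add: swap_edge_def insert_commute)
  then have "reachable V E' u s" using u cut_facts by (simp add: reachable_edge)
  then have all_to_s: "reachable V E' a s" if "a \<in> V" for a
    using to_s[of a] reachable_trans[OF to_u[of a]] that by (cases "a \<in> S") auto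
  have "reachable V E' a b" if "a \<in> V" "b \<in> V" for a b
    using reachable_trans[OF all_to_s[OF that(1)] reachable_sym[OF all_to_s[OF that(2)]]] .
  then show ?thesis unfolding connected_graph_iff_reachable using cut_facts by blast
qed

lemma swapped_crossing_edge:
  assumes e: "{v, w} \<in> E'" and crossing: "v \<in> S \<longleftrightarrow> w \<notin> S"
  shows "{v, w} = {s, u}"
proof (cases "v \<in> S")
  case True
  then have "v = s \<and> w = u" using e crossing swapped_cut unfolding one_edge_cut_def by blast
  then show ?thesis by simp
next
  case False
  have "{w, v} \<in> E'" using e by (simp add: insert_commute)
  then have "w = s \<and> v = u" using False crossing swapped_cut unfolding one_edge_cut_def by blast
  then show ?thesis by (simp add: insert_commute)
qed

lemma swapped_bypass_imp_bypass:
  assumes ab: "{a, b} \<in> E'" "{a, b} \<noteq> {s, u}" "reachable V (E' - {{a, b}}) a b"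
  shows "reachable V (E - {{a, b}}) a b"
proof -
  interpret swapped: connected_simple_graph V E'
    using swapped_connected swapped_simple by unfold_locales
  have same_side: "a \<in> S \<longleftrightarrow> b \<in> S" using swapped_crossing_edge[OF ab(1)] ab(2) by blast
  obtain T t where T: "a \<in> T" "b \<in> T" "t \<in> T" "T \<subseteq> V"
    and inside: "\<And>v w. {v, w} \<in> E' \<Longrightarrow> v \<in> T \<Longrightarrow> w \<in> T \<Longrightarrow> {v, w} \<in> E"
    and leaving: "\<And>v w. {v, w} \<in> E' \<Longrightarrow> v \<in> T \<Longrightarrow> w \<notin> T \<Longrightarrow> v = t"
  proof (cases "a \<in> S")
    case True
    show thesis
    proof (rule that[of S s])
      show "a \<in> S" "b \<in> S" "s \<in> S" "S \<subseteq> V" using True same_side cut_facts by auto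
      show "{v, w} \<in> E" if e: "{v, w} \<in> E'" "v \<in> S" "w \<in> S" for v w
        using same_edges_in_S[OF e(2,3)] e(1) by blast
      show "v = s" if e: "{v, w} \<in> E'" "v \<in> S" "w \<notin> S" for v w
        using swapped_cut e unfolding one_edge_cut_def by blast
    qed
  next
    case False
    show thesis
    proof (rule that[of "V - S" u])
      show "a \<in> V - S" "b \<in> V - S" "u \<in> V - S" "V - S \<subseteq> V"
        using False same_side u swapped.edge_vertices[OF ab(1)] by auto
      show "{v, w} \<in> E" if e: "{v, w} \<in> E'" "v \<in> V - S" "w \<in> V - S" for v w
        using same_edges_outside_S[OF e(2,3)] e(1) by blast
      show "v = u" if e: "{v, w} \<in> E'" "v \<in> V - S" "w \<notin> V - S" for v w
        using swapped.one_edge_cut_complement[OF swapped_cut] e unfolding one_edge_cut_def by blast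
    qed
  qed
  show ?thesis
    by (rule reachable_collapse[OF ab(3) T]) (use inside leaving in blast)+
qed

lemma swapped_acyclic: "\<not> has_cycle V E'"
proof
  assume "has_cycle V E'"
  then obtain a b where ab: "{a, b} \<in> E'" "a \<noteq> b" "reachable V (E' - {{a, b}}) a b"
    using has_cycle_imp_bypassed_edge by blast
  show False
  proof (cases "{a, b} = {s, u}")
    case True
    have "b \<in> {v. v \<in> S \<longleftrightarrow> a \<in> S}"
      by (rule reachable_closed[OF ab(3)]) (use swapped_crossing_edge True in blast)+
    then show False using True cut_facts u by (auto simp: doubleton_eq_iff)
  next
    case False
    then have "{a, b} \<in> E" using ab(1) by (auto simp: swap_edge_def)
    then show False
      using bypassed_edge_imp_has_cycle[OF _ ab(2) swapped_bypass_imp_bypass[OF ab(1) False ab(3)]]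
        acyclic by blast
  qed
qed

lemma swapped_tree: "is_tree V E'"
  using swapped_simple swapped_connected swapped_acyclic by (simp add: is_tree_def)

end

sublocale edge_swap \<subseteq> swapped: tree_graph V "swap_edge E s p u"
  by unfold_locales (rule swapped_tree)

context edge_swap
begin

lemma dist_swapped_in_S: "a \<in> S \<Longrightarrow> b \<in> S \<Longrightarrow> dist V E' a b = dist V E a b"
  by (intro dist_eq_if_same_inside[OF swapped.connected_simple_graph_axioms cut swapped_cut])
    (simp_all add: same_edges_in_S)

lemma dist_swapped_outside_S: "a \<in> V - S \<Longrightarrow> b \<in> V - S \<Longrightarrow> dist V E' a b = dist V E a b"
  by (intro dist_eq_if_same_inside[OF swapped.connected_simple_graph_axioms
        one_edge_cut_complement[OF cut] swapped.one_edge_cut_complement[OF swapped_cut]])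
    (simp_all add: same_edges_outside_S)

lemma dist_swapped_across:
  assumes "a \<in> S" "b \<in> V - S"
  shows "dist V E' a b = dist V E a s + 1 + dist V E u b"
  using swapped.dist_across_cut[OF swapped_cut] dist_swapped_in_S dist_swapped_outside_S
    assms cut_facts u by simp

lemma dist_swapped_diff:
  fixes \<delta> :: "'a \<Rightarrow> int"
  defines "\<delta> b \<equiv> int (dist V E u b) - int (dist V E p b)"
  assumes ab: "a \<in> V" "b \<in> V"
  shows "int (dist V E' a b) - int (dist V E a b)
           = (if a \<in> S \<and> b \<notin> S then \<delta> b else if a \<notin> S \<and> b \<in> S then \<delta> a else 0)"
proof -
  have across: "int (dist V E' a b) - int (dist V E a b) = \<delta> b" if "a \<in> S" "b \<in> V - S" for a b
    using dist_swapped_across[OF that] dist_across_cut[OF cut] that unfolding \<delta>_def by simp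
  show ?thesis
    using across[of a b] across[of b a] dist_swapped_in_S[of a b] dist_swapped_outside_S[of a b]
      dist_commute[of a b] swapped.dist_commute[of a b] ab
    by auto
qed

lemma sum_dist_swapped:
  "int (\<Sum>a\<in>V. \<Sum>b\<in>V. dist V E' a b) = int (\<Sum>a\<in>V. \<Sum>b\<in>V. dist V E a b)
     + 2 * int (card S) * (\<Sum>b\<in>V - S. int (dist V E u b) - int (dist V E p b))"
proof -
  define \<delta> where "\<delta> b = int (dist V E u b) - int (dist V E p b)" for b
  define g where "g a b = int (dist V E' a b) - int (dist V E a b)" for a b
  have split: "(\<Sum>x\<in>V. f x) = (\<Sum>x\<in>S. f x) + (\<Sum>x\<in>V - S. f x)" for f :: "'a \<Rightarrow> int"
    using sum.subset_diff[OF cut_facts(1) finite_V, of f] by (simp add: add.commute)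
  have "int (\<Sum>a\<in>V. \<Sum>b\<in>V. dist V E' a b) - int (\<Sum>a\<in>V. \<Sum>b\<in>V. dist V E a b)
      = (\<Sum>a\<in>V. \<Sum>b\<in>V. g a b)"
    by (simp add: g_def sum_subtractf)
  also have "\<dots> = (\<Sum>a\<in>S. \<Sum>b\<in>S. g a b) + (\<Sum>a\<in>S. \<Sum>b\<in>V - S. g a b)
      + ((\<Sum>a\<in>V - S. \<Sum>b\<in>S. g a b) + (\<Sum>a\<in>V - S. \<Sum>b\<in>V - S. g a b))"
    by (simp only: split sum.distrib)
  also have "\<dots> = (\<Sum>a\<in>S. \<Sum>b\<in>V - S. \<delta> b) + (\<Sum>a\<in>V - S. \<Sum>b\<in>S. \<delta> a)"
  proof -
    have diff: "g a b = (if a \<in> S \<and> b \<notin> S then \<delta> b else if a \<notin> S \<and> b \<in> S then \<delta> a else 0)"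
      if "a \<in> V" "b \<in> V" for a b
      using dist_swapped_diff[OF that] unfolding g_def \<delta>_def .
    have "(\<Sum>a\<in>S. \<Sum>b\<in>S. g a b) = 0" "(\<Sum>a\<in>V - S. \<Sum>b\<in>V - S. g a b) = 0"
      by (auto intro!: sum.neutral simp: diff subsetD[OF cut_facts(1)])
    moreover have "(\<Sum>a\<in>S. \<Sum>b\<in>V - S. g a b) = (\<Sum>a\<in>S. \<Sum>b\<in>V - S. \<delta> b)"
      "(\<Sum>a\<in>V - S. \<Sum>b\<in>S. g a b) = (\<Sum>a\<in>V - S. \<Sum>b\<in>S. \<delta> a)"
      by (auto intro!: sum.cong simp: diff subsetD[OF cut_facts(1)])
    ultimately show ?thesis by simp
  qed
  also have "\<dots> = 2 * int (card S) * (\<Sum>b\<in>V - S. \<delta> b)"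
    by (simp add: sum_distrib_left mult.assoc)
  finally show ?thesis unfolding \<delta>_def by linarith
qed

lemma wiener_swapped_greater:
  assumes "(\<Sum>b\<in>V - S. int (dist V E p b)) < (\<Sum>b\<in>V - S. int (dist V E u b))"
  shows "wiener V E < wiener V E'"
proof -
  let ?\<Delta> = "\<Sum>b\<in>V - S. int (dist V E u b) - int (dist V E p b)"
  have "0 < ?\<Delta>" using assms by (simp add: sum_subtractf)
  moreover have "0 < card S" using cut_facts finite_V by (auto simp: card_gt_0_iff finite_subset)
  ultimately have "0 < int (card S) * ?\<Delta>" by simp
  then have "(\<Sum>a\<in>V. \<Sum>b\<in>V. dist V E a b) + 2 \<le> (\<Sum>a\<in>V. \<Sum>b\<in>V. dist V E' a b)"
    using sum_dist_swapped[unfolded mult.assoc] by linarith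
  then show ?thesis unfolding wiener_def by linarith
qed

lemma diameter_swapped:
  assumes bound: "\<And>a b. a \<in> S \<Longrightarrow> b \<in> V - S \<Longrightarrow> dist V E a s + 1 + dist V E u b \<le> diameter V E"
    and attained: "a0 \<in> V - S" "b0 \<in> V - S" "dist V E a0 b0 = diameter V E"
  shows "diameter V E' = diameter V E"
proof (rule diameter_eqI[OF finite_V])
  show "a0 \<in> V" "b0 \<in> V" "dist V E' a0 b0 = diameter V E"
    using attained dist_swapped_outside_S by auto
  fix a b assume ab: "a \<in> V" "b \<in> V"
  show "dist V E' a b \<le> diameter V E"
  proof (cases "a \<in> S \<longleftrightarrow> b \<in> S")
    case True
    then show ?thesis
      using dist_swapped_in_S dist_swapped_outside_S dist_le_diameter[OF finite_V ab] ab by auto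
  next
    case False
    then show ?thesis
      using dist_swapped_across[of a b] dist_swapped_across[of b a] swapped.dist_commute[OF ab]
        bound[of a b] bound[of b a] ab by auto
  qed
qed

end

section \<open>Pendant parts of a Wiener-maximal tree\<close>

definition pendant_part :: "'a set \<Rightarrow> 'a set set \<Rightarrow> 'a \<Rightarrow> 'a set \<Rightarrow> 'a \<Rightarrow> 'a \<Rightarrow> bool" where
  "pendant_part V E x S s p \<longleftrightarrow> one_edge_cut V E S s p \<and> x \<in> S \<and>
     (\<forall>a\<in>S. \<forall>b\<in>S. dist V E a b \<le> dist V E x s)"

context tree_graph
begin

lemma pendant_part_extend:
  assumes pend: "pendant_part V E x S s p"
    and next_edge: "{p, q} \<in> E" "q \<noteq> s"
    and unique: "\<And>w. {p, w} \<in> E \<Longrightarrow> w \<noteq> s \<Longrightarrow> w = q"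
  shows "pendant_part V E x (insert p S) p q"
proof -
  have cut: "one_edge_cut V E S s p" and x: "x \<in> S"
    and diam_S: "\<And>a b. a \<in> S \<Longrightarrow> b \<in> S \<Longrightarrow> dist V E a b \<le> dist V E x s"
    using pend unfolding pendant_part_def by blast+
  have S: "S \<subseteq> V" "s \<in> S" "p \<in> V" "p \<notin> S"
    and leaving: "\<And>v w. {v, w} \<in> E \<Longrightarrow> v \<in> S \<Longrightarrow> w \<notin> S \<Longrightarrow> v = s \<and> w = p"
    using cut unfolding one_edge_cut_def by blast+
  have "{q, p} \<in> E" using next_edge(1) by (simp add: insert_commute)
  then have q: "q \<in> V" "q \<notin> insert p S"
    using edge_vertices[OF next_edge(1)] edge_ends_distinct[OF next_edge(1)] leaving[of q p] next_edge S
    by auto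
  have "v = p \<and> w = q" if e: "{v, w} \<in> E" "v \<in> insert p S" "w \<notin> insert p S" for v w
  proof (cases "v = p")
    case True
    then show ?thesis using unique[of w] e S(2) by blast
  next
    case False
    then show ?thesis using leaving[of v w] e by blast
  qed
  then have "one_edge_cut V E (insert p S) p q"
    using S q next_edge unfolding one_edge_cut_def by blast
  moreover have to_p: "dist V E a p \<le> dist V E x p" if "a \<in> S" for a
    using dist_across_cut[OF cut that S(3,4)] dist_across_cut[OF cut x S(3,4)] diam_S[OF that S(2)]
    by simp
  have "dist V E a b \<le> dist V E x p" if "a \<in> insert p S" "b \<in> insert p S" for a b
  proof -
    have "dist V E x s \<le> dist V E x p"
      using dist_across_cut[OF cut x S(3,4)] by simp
    moreover have "a \<in> V" "b \<in> V" using that S by auto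
    ultimately show ?thesis
      using that to_p diam_S[of a b] dist_self[OF S(3)] dist_commute[of p b] by auto
  qed
  ultimately show ?thesis using x unfolding pendant_part_def by blast
qed

lemma leaf_pendant_part:
  assumes "leaf V E x"
  obtains y where "pendant_part V E x {x} x y"
proof -
  have x: "x \<in> V" "card {e \<in> E. x \<in> e} = 1"
    using assms unfolding leaf_def degree_def by auto
  then obtain e where e: "{e \<in> E. x \<in> e} = {e}" by (auto simp: card_1_singleton_iff)
  then have "e \<in> E" "x \<in> e" by auto
  moreover obtain u v where "e = {u, v}"
    using \<open>e \<in> E\<close> simple unfolding simple_graph_def by blast
  ultimately obtain y where y: "e = {x, y}" "{x, y} \<in> E"
    by (cases "u = x") (auto simp: insert_commute)
  have "v = x \<and> w = y" if vw: "{v, w} \<in> E" "v \<in> {x}" "w \<notin> {x}" for v w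
  proof -
    have "{v, w} \<in> {e \<in> E. x \<in> e}" using vw by simp
    then show ?thesis using vw e y by (auto simp: doubleton_eq_iff)
  qed
  moreover have "y \<in> V" "y \<notin> {x}"
    using edge_vertices[OF y(2)] edge_ends_distinct[OF y(2)] by auto
  ultimately have "one_edge_cut V E {x} x y"
    using x(1) y(2) unfolding one_edge_cut_def by blast
  then show thesis using that by (simp add: pendant_part_def)
qed

end

locale nonperipheral_vertex_of_maximal_tree = tree_graph +
  fixes x :: 'a
  assumes x_in_V: "x \<in> V"
    and nonperipheral: "\<And>b. b \<in> V \<Longrightarrow> dist V E x b < diameter V E"
    and wiener_maximal:
      "\<And>E'. is_tree V E' \<Longrightarrow> diameter V E' = diameter V E \<Longrightarrow> wiener V E' \<le> wiener V E"
begin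

context
  fixes S s p
  assumes pend: "pendant_part V E x S s p"
begin

lemma pendant_facts:
  "one_edge_cut V E S s p" "x \<in> S" "\<And>a b. a \<in> S \<Longrightarrow> b \<in> S \<Longrightarrow> dist V E a b \<le> dist V E x s"
  "S \<subseteq> V" "s \<in> S" "p \<in> V" "p \<notin> S"
  using pend unfolding pendant_part_def one_edge_cut_def by blast+

lemma dist_from_pendant_less_diameter:
  assumes "a \<in> S" "b \<in> V"
  shows "dist V E a b < diameter V E"
proof (cases "b \<in> S")
  case True
  then have "dist V E a b \<le> dist V E x s" using pendant_facts assms by blast
  also have "\<dots> < dist V E x p"
    using dist_across_cut[OF pendant_facts(1,2,6,7)] dist_self pendant_facts by simp
  also have "\<dots> < diameter V E" using nonperipheral pendant_facts by blast
  finally show ?thesis .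
next
  case False
  have "dist V E a b = dist V E a s + 1 + dist V E p b"
    using dist_across_cut[OF pendant_facts(1) assms False] .
  also have "\<dots> \<le> dist V E x s + 1 + dist V E p b" using pendant_facts assms by simp
  also have "\<dots> = dist V E x b"
    using dist_across_cut[OF pendant_facts(1,2) assms(2) False] by simp
  also have "\<dots> < diameter V E" using nonperipheral assms by blast
  finally show ?thesis .
qed

lemma diametral_pair_beyond_pendant:
  "\<exists>a\<in>V - S. \<exists>b\<in>V - S. dist V E a b = diameter V E"
proof -
  obtain a b where ab: "a \<in> V" "b \<in> V" "dist V E a b = diameter V E"
    using diameter_attained[OF finite_V] x_in_V by blast
  then have "a \<notin> S" "b \<notin> S"
    using dist_from_pendant_less_diameter[of a b] dist_from_pendant_less_diameter[of b a]
      dist_commute[of a b] by auto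
  then show ?thesis using ab by blast
qed

lemma pendant_part_next_neighbour: "\<exists>q. {p, q} \<in> E \<and> q \<noteq> s"
proof (rule ccontr)
  assume no_edge: "\<nexists>q. {p, q} \<in> E \<and> q \<noteq> s"
  have closed: "b \<in> insert p S" if "b \<in> V" for b
  proof (rule reachable_closed[of V E p b])
    show "reachable V E p b" using connected that pendant_facts
      unfolding connected_graph_iff_reachable by blast
    fix v w assume "{v, w} \<in> E" "v \<in> insert p S"
    then show "w \<in> insert p S"
      using no_edge pendant_facts(1) pendant_facts(5) unfolding one_edge_cut_def by blast
  qed simp
  obtain a b where ab: "a \<in> V - S" "b \<in> V - S" "dist V E a b = diameter V E"
    using diametral_pair_beyond_pendant by blast
  then have "a = p" "b = p" using closed by auto
  then have "diameter V E = 0" using ab(3) dist_self pendant_facts by simp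
  then show False using nonperipheral[OF x_in_V] by simp
qed

lemma sum_dist_beyond_pendant_le:
  assumes e: "{p, u} \<in> E" and u: "u \<notin> S"
  shows "(\<Sum>b\<in>V - S. int (dist V E u b)) \<le> (\<Sum>b\<in>V - S. int (dist V E p b))"
proof (rule ccontr)
  assume gain: "\<not> ?thesis"
  interpret edge_swap V E S s p u
    using pendant_facts(1) u edge_vertices[OF e] by unfold_locales auto
  obtain a0 b0 where pair: "a0 \<in> V - S" "b0 \<in> V - S" "dist V E a0 b0 = diameter V E"
    using diametral_pair_beyond_pendant by blast
  have "diameter V E' = diameter V E"
  proof (rule diameter_swapped[OF _ pair])
    fix a b assume ab: "a \<in> S" "b \<in> V - S"
    have "dist V E u b \<le> dist V E p b + 1"
      using dist_edge_step[of p u b] dist_commute e ab edge_vertices[OF e] by auto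
    moreover have "dist V E a s \<le> dist V E x s" using pendant_facts ab by blast
    moreover have "dist V E x b = dist V E x s + 1 + dist V E p b"
      using dist_across_cut[OF pendant_facts(1,2)] ab by blast
    moreover have "dist V E x b < diameter V E" using nonperipheral ab by blast
    ultimately show "dist V E a s + 1 + dist V E u b \<le> diameter V E" by linarith
  qed
  then have "wiener V E' \<le> wiener V E" by (rule wiener_maximal[OF swapped.tree])
  moreover have "(\<Sum>b\<in>V - S. int (dist V E p b)) < (\<Sum>b\<in>V - S. int (dist V E u b))"
    using gain by linarith
  ultimately show False using wiener_swapped_greater by fastforce
qed

end

lemma no_pendant_part: "\<not> pendant_part V E x S s p"
proof (induction "card (V - S)" arbitrary: S s p rule: less_induct)
  case less
  show ?case
  proof
    assume pend: "pendant_part V E x S s p"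
    note facts = pendant_facts[OF pend]
    obtain q where q: "{p, q} \<in> E" "q \<noteq> s" using pendant_part_next_neighbour[OF pend] by blast
    have beyond: "w \<notin> S" if "{p, w} \<in> E" "w \<noteq> s" for w
    proof
      assume "w \<in> S"
      moreover have "{w, p} \<in> E" using that(1) by (simp add: insert_commute)
      ultimately show False using facts(1) that(2) unfolding one_edge_cut_def by blast
    qed
    show False
    proof (cases "\<forall>w. {p, w} \<in> E \<longrightarrow> w \<noteq> s \<longrightarrow> w = q")
      case True
      have "pendant_part V E x (insert p S) p q"
        using pendant_part_extend[OF pend q] True by blast
      moreover have "card (V - insert p S) < card (V - S)"
      proof -
        have "V - insert p S = (V - S) - {p}" "p \<in> V - S" using facts(6,7) by blast+
        then show ?thesis using card_Diff1_less[of "V - S" p] finite_V by simp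
      qed
      ultimately show False using less.hyps[of "insert p S"] by blast
    next
      case False
      then obtain q' where q': "{p, q'} \<in> E" "q' \<noteq> s" "q' \<noteq> q" by blast
      have "{q, p} \<in> E" "{q', p} \<in> E" using q q' by (simp_all add: insert_commute)
      then obtain u where u: "u \<in> {q, q'}"
        "(\<Sum>b\<in>V - S. int (dist V E p b)) < (\<Sum>b\<in>V - S. int (dist V E u b))"
        using farther_neighbour_exists[OF facts(1) _ _ beyond[OF q] beyond[OF q'(1,2)] q'(3)[symmetric]]
        by blast
      then have "{p, u} \<in> E" "u \<notin> S" using q q' beyond by auto
      then show False using sum_dist_beyond_pendant_le[OF pend] u(2) by force
    qed
  qed
qed

end

section \<open>Relabelling vertices\<close>

abbreviation image_edges :: "('a \<Rightarrow> 'b) \<Rightarrow> 'a set set \<Rightarrow> 'b set set" where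
  "image_edges f E \<equiv> (`) f ` E"

lemma edge_image: "{a, b} \<in> E \<Longrightarrow> {f a, f b} \<in> image_edges f E"
  using imageI[of "{a, b}" E "(`) f"] by simp

lemma walk_image: "walk V E xs \<Longrightarrow> walk (f ` V) (image_edges f E) (map f xs)"
  unfolding walk_iff_edge_chain successively_map by (auto elim!: successively_mono intro: edge_image)

lemma reachable_image:
  assumes "reachable V E a b"
  shows "reachable (f ` V) (image_edges f E) (f a) (f b)"
proof -
  obtain xs where "walk V E xs" "hd xs = a" "last xs = b"
    using assms unfolding reachable_def by blast
  then show ?thesis
    unfolding reachable_def using walk_image[of V E xs f]
    by (intro exI[of _ "map f xs"]) (simp add: walk_def hd_map last_map)
qed

lemma connected_graph_image:
  assumes "connected_graph V E"
  shows "connected_graph (f ` V) (image_edges f E)"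
proof -
  have "reachable (f ` V) (image_edges f E) (f a) (f b)" if "a \<in> V" "b \<in> V" for a b
    by (rule reachable_image) (use assms that in \<open>simp add: connected_graph_iff_reachable\<close>)
  then show ?thesis using assms unfolding connected_graph_iff_reachable by blast
qed

lemma simple_graph_image:
  assumes "inj_on f V" "simple_graph V E"
  shows "simple_graph (f ` V) (image_edges f E)"
proof (unfold simple_graph_def, intro conjI ballI)
  show "finite (f ` V)" using assms(2) by (simp add: simple_graph_def)
  fix e' assume "e' \<in> image_edges f E"
  then obtain e where e: "e \<in> E" "e' = f ` e" by (rule imageE)
  obtain u v where uv: "e = {u, v}" "u \<noteq> v" "u \<in> V" "v \<in> V"
    using e(1) assms(2) unfolding simple_graph_def by blast
  have "f u \<noteq> f v" using assms(1) uv(2-4) by (meson inj_on_def)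
  then show "\<exists>u v. e' = {u, v} \<and> u \<noteq> v \<and> u \<in> f ` V \<and> v \<in> f ` V"
    by (intro exI[of _ "f u"] exI[of _ "f v"]) (simp add: e(2) uv)
qed

lemma has_cycle_image:
  assumes "inj_on f V" "has_cycle V E"
  shows "has_cycle (f ` V) (image_edges f E)"
proof -
  obtain xs where xs: "walk V E xs" "distinct xs" "length xs \<ge> 3" "{last xs, hd xs} \<in> E"
    using assms(2) unfolding has_cycle_def by blast
  then have "distinct (map f xs)"
    using assms(1) by (simp add: distinct_map walk_def inj_on_subset)
  moreover have "{last (map f xs), hd (map f xs)} \<in> image_edges f E"
    using edge_image[OF xs(4), of f] xs(1) by (simp add: walk_def last_map hd_map)
  ultimately show ?thesis
    unfolding has_cycle_def using walk_image[OF xs(1)] xs(3) by (intro exI[of _ "map f xs"]) simp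
qed

lemma image_edges_inv_into:
  assumes "inj_on f V" "simple_graph V E"
  shows "image_edges (inv_into V f) (image_edges f E) = E"
proof -
  have cancel: "inv_into V f ` f ` e = e" if e: "e \<in> E" for e
  proof -
    obtain u v where "e = {u, v}" "u \<in> V" "v \<in> V"
      using e assms(2) unfolding simple_graph_def by blast
    then show ?thesis using assms(1) by simp
  qed
  have "image_edges (inv_into V f) (image_edges f E) = (\<lambda>e. inv_into V f ` f ` e) ` E"
    by (simp only: image_image)
  also have "\<dots> = (\<lambda>e. e) ` E" by (rule image_cong[OF refl cancel])
  finally show ?thesis by simp
qed

context connected_simple_graph
begin

lemma image_graph: "inj_on f V \<Longrightarrow> connected_simple_graph (f ` V) (image_edges f E)"
  using connected simple connected_graph_image simple_graph_image by unfold_locales blast+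

lemma dist_image_le:
  assumes "inj_on f V" "a \<in> V" "b \<in> V"
  shows "dist (f ` V) (image_edges f E) (f a) (f b) \<le> dist V E a b"
proof -
  obtain xs where "walk V E xs" "hd xs = a" "last xs = b" "length xs = Suc (dist V E a b)"
    using shortest_walk assms by blast
  then show ?thesis
    using connected_simple_graph.dist_le_walk_length[OF image_graph[OF assms(1)] walk_image]
    by (fastforce simp: walk_def hd_map last_map)
qed

lemma dist_image:
  assumes inj: "inj_on f V" and ab: "a \<in> V" "b \<in> V"
  shows "dist (f ` V) (image_edges f E) (f a) (f b) = dist V E a b"
proof (rule antisym)
  show "dist (f ` V) (image_edges f E) (f a) (f b) \<le> dist V E a b"
    using dist_image_le[OF assms] .
  have "dist (inv_into V f ` f ` V) (image_edges (inv_into V f) (image_edges f E))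
      (inv_into V f (f a)) (inv_into V f (f b)) \<le> dist (f ` V) (image_edges f E) (f a) (f b)"
    using connected_simple_graph.dist_image_le[OF image_graph[OF inj] inj_on_inv_into] ab by blast
  then show "dist V E a b \<le> dist (f ` V) (image_edges f E) (f a) (f b)"
    using ab inj by (simp add: image_edges_inv_into[OF inj simple])
qed

lemma diameter_image:
  assumes inj: "inj_on f V"
  shows "diameter (f ` V) (image_edges f E) = diameter V E"
proof (rule antisym)
  have V: "finite V" "V \<noteq> {}" using finite_V connected by (auto simp: connected_graph_def)
  then obtain a b where "a \<in> V" "b \<in> V"
    "dist (f ` V) (image_edges f E) (f a) (f b) = diameter (f ` V) (image_edges f E)"
    using diameter_attained[of "f ` V"] by blast
  then show "diameter (f ` V) (image_edges f E) \<le> diameter V E"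
    using dist_image[OF inj] dist_le_diameter[OF V(1)] by metis
  obtain a b where "a \<in> V" "b \<in> V" "dist V E a b = diameter V E"
    using diameter_attained[OF V] by blast
  then show "diameter V E \<le> diameter (f ` V) (image_edges f E)"
    using dist_image[OF inj] dist_le_diameter[of "f ` V"] V(1) by (metis finite_imageI imageI)
qed

lemma wiener_image:
  assumes "inj_on f V"
  shows "wiener (f ` V) (image_edges f E) = wiener V E"
  unfolding wiener_def using assms by (simp add: sum.reindex dist_image)

end

lemma is_tree_image:
  assumes inj: "inj_on f V" and tree: "is_tree V E"
  shows "is_tree (f ` V) (image_edges f E)"
proof -
  interpret tree_graph V E by (rule tree_graph.intro[OF tree])
  have "\<not> has_cycle (f ` V) (image_edges f E)"
  proof
    assume "has_cycle (f ` V) (image_edges f E)"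
    then have "has_cycle (inv_into V f ` f ` V) (image_edges (inv_into V f) (image_edges f E))"
      by (rule has_cycle_image[OF inj_on_inv_into, OF subset_refl])
    then show False
      using acyclic by (simp add: image_edges_inv_into[OF inj simple] inv_into_image_cancel[OF inj])
  qed
  then show ?thesis
    using simple_graph_image[OF inj simple] connected_graph_image[OF connected]
    by (simp add: is_tree_def)
qed

text \<open>\<open>max_wiener_tree\<close> only compares with trees on natural numbers; relabelling makes it
  compare with every tree on the same vertex set.\<close>

lemma max_wiener_tree_maximal:
  assumes max: "max_wiener_tree V E" and tree': "is_tree V E'"
    and diam: "diameter V E' = diameter V E"
  shows "wiener V E' \<le> wiener V E"
proof -
  interpret T': tree_graph V E' by (rule tree_graph.intro[OF tree'])
  obtain f :: "'a \<Rightarrow> nat" where f: "inj_on f V"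
    using finite_imp_inj_to_nat_seg[OF T'.finite_V] by blast
  have "diameter (f ` V) (image_edges f E') = diameter V E"
    using T'.diameter_image[OF f] diam by simp
  then have "wiener (f ` V) (image_edges f E') \<le> wiener V E"
    using max is_tree_image[OF f tree'] card_image[OF f] unfolding max_wiener_tree_def by blast
  then show ?thesis using T'.wiener_image[OF f] by simp
qed

theorem mainTheorem3:
  fixes V :: "'a set" and E :: "'a set set" and n d :: nat and x :: 'a
  assumes "is_tree V E" and "card V = n" and "diameter V E = d"
    and "max_wiener_tree V E"
    and "leaf V E x"
  shows "ecc V E x = d"
proof (rule ccontr)
  assume ecc_ne: "ecc V E x \<noteq> d"
  interpret tree_graph V E by (rule tree_graph.intro) fact
  have x: "x \<in> V" using assms(5) by (simp add: leaf_def)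
  obtain b where "b \<in> V" "ecc V E x = dist V E x b" using ecc_attained[OF finite_V x] .
  then have "ecc V E x < diameter V E"
    using dist_le_diameter[OF finite_V x \<open>b \<in> V\<close>, of E] ecc_ne assms(3) by linarith
  then interpret nonperipheral_vertex_of_maximal_tree V E x
    using x dist_le_ecc[OF finite_V] max_wiener_tree_maximal[OF assms(4)]
    by unfold_locales (auto intro: le_less_trans)
  obtain y where "pendant_part V E x {x} x y" using leaf_pendant_part[OF assms(5)] .
  then show False using no_pendant_part by blast
qed

end
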